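(* Let $R$ be a ring and $n\geq 1$. Then $R$ is isomorphic to a direct product of $n$ left localization maximal rings if and only if the following conditions hold: (1) $\max\mathrm{Den}_l(R)=\{S_1,\ldots,S_n\}$ (with the $S_i$ distinct); (2) $\mathfrak{l}_R=0$; (3) $\mathrm{ass}(S_i)+\mathrm{ass}(S_j)=R$ for all $i\neq j$; (4) the factor rings $R/\mathrm{ass}(S_i)$, $i=1,\ldots,n$, are left localization maximal rings. Moreover, in this case: (a) for each $i$, the ring $R_i:=S_i^{-1}R$ is a left localization maximal ring, the homomorphism $\sigma_i:R\to R_i$, $r\mapsto\frac{r}{1}$, is surjective with $\ker(\sigma_i)=\mathrm{ass}(S_i)$, so $R_i\cong R/\mathrm{ass}(S_i)$; (b) the map $\sigma:=\prod_{i=1}^n\sigma_i:R\to\prod_{i=1}^nR_i$ is an isomorphism; (c) identifying $R$ with $\prod_{i=1}^nR_i$ via $\sigma$, one has $S_i=R_1\times\cdots\times R_i^*\times\cdots\times R_n=\sigma_i^{-1}(R_i^* )$, where $R_i^*$ is the group of units of $R_i\cong R/\mathrm{ass}(S_i)$, and $R_i^*=\sigma_i(S_i)$ for each $i$; (d) $\mathrm{ass}(S_i)=R_1\times\cdots\times 0\times\cdots\times R_n$ (with $0$ in the $i$-th place) for each $i$.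
   Context: All rings are associative with $1$. A multiplicative subset $S$ of $R$ ($1\in S$, $0\notin S$, closed under multiplication) is a left Ore set if $Sr\cap Rs\neq\emptyset$ for all $r\in R$, $s\in S$; for it, $\mathrm{ass}(S):=\{r\in R: sr=0\text{ for some } s\in S\}$. A left Ore set $S$ is a left denominator set if $rs=0$ ($r\in R$, $s\in S$) implies $tr=0$ for some $t\in S$. $\mathrm{Den}_l(R)$ is the set of left denominator sets, $S^{-1}R$ the left localization, $\max\mathrm{Den}_l(R)$ the set of maximal elements of $(\mathrm{Den}_l(R),\subseteq)$, and $\mathfrak{l}_R:=\bigcap_{S\in\max\mathrm{Den}_l(R)}\mathrm{ass}(S)$ the left localization radical. For a ring $A$, $S_0(A)$ is the largest left Ore set of $A$ consisting of regular elements (it exists and is a left denominator set) and $Q_l(A):=S_0(A)^{-1}A$. A ring $A$ is a left localization maximal ring if $A=Q_l(A)$ (i.e. $S_0(A)$ consists of units of $A$) and $\{\mathrm{ass}(S): S\in\mathrm{Den}_l(A)\}=\{0\}$. *)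

theory Defs
  imports "HOL-Algebra.Algebra"
begin

definition mult_subset :: "('a,'m) ring_scheme \<Rightarrow> 'a set \<Rightarrow> bool" where
  "mult_subset R S \<longleftrightarrow> S \<subseteq> carrier R \<and> \<one>\<^bsub>R\<^esub> \<in> S \<and> \<zero>\<^bsub>R\<^esub> \<notin> S \<and>
     (\<forall>s\<in>S. \<forall>t\<in>S. s \<otimes>\<^bsub>R\<^esub> t \<in> S)"

definition left_ore :: "('a,'m) ring_scheme \<Rightarrow> 'a set \<Rightarrow> bool" where
  "left_ore R S \<longleftrightarrow> mult_subset R S \<and>
     (\<forall>r\<in>carrier R. \<forall>s\<in>S. \<exists>s'\<in>S. \<exists>r'\<in>carrier R. s' \<otimes>\<^bsub>R\<^esub> r = r' \<otimes>\<^bsub>R\<^esub> s)"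

definition ass :: "('a,'m) ring_scheme \<Rightarrow> 'a set \<Rightarrow> 'a set" where
  "ass R S = {r \<in> carrier R. \<exists>s\<in>S. s \<otimes>\<^bsub>R\<^esub> r = \<zero>\<^bsub>R\<^esub>}"

definition left_den :: "('a,'m) ring_scheme \<Rightarrow> 'a set \<Rightarrow> bool" where
  "left_den R S \<longleftrightarrow> left_ore R S \<and>
     (\<forall>r\<in>carrier R. \<forall>s\<in>S. r \<otimes>\<^bsub>R\<^esub> s = \<zero>\<^bsub>R\<^esub> \<longrightarrow> (\<exists>t\<in>S. t \<otimes>\<^bsub>R\<^esub> r = \<zero>\<^bsub>R\<^esub>))"

definition Den_l :: "('a,'m) ring_scheme \<Rightarrow> 'a set set" where
  "Den_l R = {S. left_den R S}"

definition maxDen_l :: "('a,'m) ring_scheme \<Rightarrow> 'a set set" where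
  "maxDen_l R = {S \<in> Den_l R. \<forall>T\<in>Den_l R. S \<subseteq> T \<longrightarrow> T = S}"

definition loc_radical :: "('a,'m) ring_scheme \<Rightarrow> 'a set" where
  "loc_radical R = carrier R \<inter> \<Inter> (ass R ` maxDen_l R)"

definition regular :: "('a,'m) ring_scheme \<Rightarrow> 'a \<Rightarrow> bool" where
  "regular R x \<longleftrightarrow> x \<in> carrier R \<and>
     (\<forall>y\<in>carrier R. (x \<otimes>\<^bsub>R\<^esub> y = \<zero>\<^bsub>R\<^esub> \<longrightarrow> y = \<zero>\<^bsub>R\<^esub>) \<and>
                     (y \<otimes>\<^bsub>R\<^esub> x = \<zero>\<^bsub>R\<^esub> \<longrightarrow> y = \<zero>\<^bsub>R\<^esub>))"

text \<open>S_0(A): the largest left Ore set consisting of regular elements, i.e. the union of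
  all such sets (the paper states that this union is itself such a set).\<close>
definition S0 :: "('a,'m) ring_scheme \<Rightarrow> 'a set" where
  "S0 A = \<Union> {S. left_ore A S \<and> S \<subseteq> {x. regular A x}}"

text \<open>Left localization maximal ring: A = Q_l(A) (S_0(A) consists of units)
  and ass(S) = 0 for every left denominator set S.\<close>
definition left_loc_maximal :: "('a,'m) ring_scheme \<Rightarrow> bool" where
  "left_loc_maximal A \<longleftrightarrow> ring A \<and> S0 A \<subseteq> Units A \<and>
     ass A ` Den_l A = {{\<zero>\<^bsub>A\<^esub>}}"

text \<open>This determines S^{-1}R
  (with r \<mapsto> r/1) uniquely up to a unique isomorphism.\<close>
definition is_left_localization ::
  "('a,'m) ring_scheme \<Rightarrow> 'a set \<Rightarrow> ('c,'n) ring_scheme \<Rightarrow> ('a \<Rightarrow> 'c) \<Rightarrow> bool" where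
  "is_left_localization R S Q \<sigma> \<longleftrightarrow> ring Q \<and> \<sigma> \<in> ring_hom R Q \<and>
     \<sigma> ` S \<subseteq> Units Q \<and>
     (\<forall>q\<in>carrier Q. \<exists>s\<in>S. \<exists>r\<in>carrier R. q = inv\<^bsub>Q\<^esub> (\<sigma> s) \<otimes>\<^bsub>Q\<^esub> \<sigma> r) \<and>
     {r \<in> carrier R. \<sigma> r = \<zero>\<^bsub>Q\<^esub>} = ass R S"

definition prod_ring :: "nat \<Rightarrow> (nat \<Rightarrow> ('b,'n) ring_scheme) \<Rightarrow> (nat \<Rightarrow> 'b) ring" where
  "prod_ring n A = \<lparr> carrier = (\<Pi>\<^sub>E i\<in>{..<n}. carrier (A i)),
     monoid.mult = (\<lambda>f g. \<lambda>i\<in>{..<n}. f i \<otimes>\<^bsub>A i\<^esub> g i),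
     one = (\<lambda>i\<in>{..<n}. \<one>\<^bsub>A i\<^esub>),
     ring.zero = (\<lambda>i\<in>{..<n}. \<zero>\<^bsub>A i\<^esub>),
     add = (\<lambda>f g. \<lambda>i\<in>{..<n}. f i \<oplus>\<^bsub>A i\<^esub> g i) \<rparr>"

definition conds :: "('a,'m) ring_scheme \<Rightarrow> nat \<Rightarrow> (nat \<Rightarrow> 'a set) \<Rightarrow> bool" where
  "conds R n S \<longleftrightarrow>
     inj_on S {..<n} \<and> maxDen_l R = S ` {..<n} \<and>
     loc_radical R = {\<zero>\<^bsub>R\<^esub>} \<and>
     (\<forall>i<n. \<forall>j<n. i \<noteq> j \<longrightarrow> ass R (S i) <+>\<^bsub>R\<^esub> ass R (S j) = carrier R) \<and>
     (\<forall>i<n. left_loc_maximal (R Quot ass R (S i)))"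

end

theory Submission
  imports Defs
begin

text \<open>
  If \<open>R \<cong> R\<^sub>1 \<times> \<dots> \<times> R\<^sub>n\<close> with every \<open>R\<^sub>i\<close> left localization maximal, the maximal left
  denominator sets of \<open>R\<close> are exactly the preimages \<open>S\<^sub>i\<close> of the unit groups \<open>R\<^sub>i\<^sup>*\<close>.
  Indeed \<open>S\<^sub>i\<close> is a left denominator set whose \<open>ass\<close> is the kernel of the \<open>i\<close>-th projection,
  and a left denominator set lying in no \<open>S\<^sub>i\<close> meets every kernel (its image in \<open>R\<^sub>i\<close> is a
  left denominator set, hence consists of units unless it contains \<open>0\<close>), so it contains a
  product vanishing in all factors, i.e. \<open>0\<close>. Conditions (1)--(4) follow.

  Conversely, under (1)--(4) each localization map \<open>\<sigma>\<^sub>i : R \<rightarrow> S\<^sub>i\<^sup>-\<^sup>1R\<close> is surjective: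
  \<open>S\<^sub>i\<close> maps to units of the left localization maximal ring \<open>R/ass(S\<^sub>i)\<close>, so the inverse of
  every \<open>\<sigma>\<^sub>i(s)\<close> lies in \<open>\<sigma>\<^sub>i(R)\<close>. The kernels \<open>ass(S\<^sub>i)\<close> are pairwise comaximal and
  intersect in the localization radical, which is \<open>0\<close>; so by the Chinese remainder theorem
  \<open>\<Prod>\<sigma>\<^sub>i\<close> is an isomorphism, and
  (a)--(d) are read off by applying the first half to this decomposition.
\<close>

section \<open>Ore sets, denominator sets and their images\<close>

lemma mult_subsetD:
  fixes R (structure)
  assumes "mult_subset R S"
  shows "S \<subseteq> carrier R" "\<one> \<in> S" "\<zero> \<notin> S" "\<And>s t. s \<in> S \<Longrightarrow> t \<in> S \<Longrightarrow> s \<otimes> t \<in> S"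
  using assms unfolding mult_subset_def by auto

lemma left_ore_mult_subset: "left_ore R S \<Longrightarrow> mult_subset R S"
  unfolding left_ore_def by simp

lemma left_oreD:
  fixes R (structure)
  assumes "left_ore R S" "r \<in> carrier R" "s \<in> S"
  shows "\<exists>s'\<in>S. \<exists>r'\<in>carrier R. s' \<otimes> r = r' \<otimes> s"
  using assms unfolding left_ore_def by auto

lemma left_den_left_ore: "left_den R S \<Longrightarrow> left_ore R S"
  unfolding left_den_def by simp

lemma left_den_mult_subset: "left_den R S \<Longrightarrow> mult_subset R S"
  unfolding left_den_def left_ore_def by simp

lemma left_denD:
  fixes R (structure)
  assumes "left_den R S" "r \<in> carrier R" "s \<in> S" "r \<otimes> s = \<zero>"
  shows "\<exists>t\<in>S. t \<otimes> r = \<zero>"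
  using assms unfolding left_den_def by auto

lemma assI:
  fixes R (structure)
  shows "r \<in> carrier R \<Longrightarrow> s \<in> S \<Longrightarrow> s \<otimes> r = \<zero> \<Longrightarrow> r \<in> ass R S"
  unfolding ass_def by auto

lemma ass_subset: "ass R S \<subseteq> carrier R"
  unfolding ass_def by auto

lemma ass_ideal:
  fixes R (structure)
  assumes R: "ring R" and S: "left_ore R S"
  shows "ideal (ass R S) R"
proof -
  interpret ring R by fact
  note S_sub = mult_subsetD[OF left_ore_mult_subset[OF S]]
  show ?thesis
  proof (rule idealI[OF R])
    show "subgroup (ass R S) (add_monoid R)"
    proof
      show "ass R S \<subseteq> carrier (add_monoid R)" using ass_subset by simp
      show "\<one>\<^bsub>add_monoid R\<^esub> \<in> ass R S" using S_sub by (auto intro: assI)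
    next
      fix x y assume "x \<in> ass R S" "y \<in> ass R S"
      then obtain s1 s2 where x: "x \<in> carrier R" "s1 \<in> S" "s1 \<otimes> x = \<zero>"
        and y: "y \<in> carrier R" "s2 \<in> S" "s2 \<otimes> y = \<zero>" unfolding ass_def by auto
      have [simp]: "s1 \<in> carrier R" "s2 \<in> carrier R" using x y S_sub by auto
      \<comment> \<open>a common left multiple of s1 and s2 in S kills x + y\<close>
      obtain s' r' where s': "s' \<in> S" "r' \<in> carrier R" "s' \<otimes> s1 = r' \<otimes> s2"
        using left_oreD[OF S _ y(2), of s1] by auto
      have [simp]: "s' \<in> carrier R" using s' S_sub by auto
      have "(s' \<otimes> s1) \<otimes> (x \<oplus> y) = s' \<otimes> (s1 \<otimes> x) \<oplus> (s' \<otimes> s1) \<otimes> y"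
        using x y s'(1,2) by (simp add: r_distr m_assoc)
      also have "\<dots> = r' \<otimes> (s2 \<otimes> y)"
        unfolding s'(3) using x y s'(1,2) by (simp add: m_assoc)
      also have "\<dots> = \<zero>" using y s'(2) by simp
      finally have "(s' \<otimes> s1) \<otimes> (x \<oplus> y) = \<zero>" .
      then show "x \<otimes>\<^bsub>add_monoid R\<^esub> y \<in> ass R S"
        using S_sub(4)[OF s'(1) x(2)] x y by (auto intro: assI)
    next
      fix x assume "x \<in> ass R S"
      then obtain s where x: "x \<in> carrier R" "s \<in> S" "s \<otimes> x = \<zero>" unfolding ass_def by auto
      then have "s \<otimes> (\<ominus> x) = \<zero>" using S_sub by (simp add: r_minus subsetD)
      then show "inv\<^bsub>add_monoid R\<^esub> x \<in> ass R S"
        using x unfolding a_inv_def[symmetric] by (auto intro: assI)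
    qed
  next
    fix a x assume "a \<in> ass R S" and x: "x \<in> carrier R"
    then obtain s where a: "a \<in> carrier R" "s \<in> S" "s \<otimes> a = \<zero>" unfolding ass_def by auto
    obtain s' r' where s': "s' \<in> S" "r' \<in> carrier R" "s' \<otimes> x = r' \<otimes> s"
      using left_oreD[OF S x a(2)] by blast
    have [simp]: "s \<in> carrier R" "s' \<in> carrier R" using a(2) s'(1) S_sub by auto
    have "s' \<otimes> (x \<otimes> a) = (r' \<otimes> s) \<otimes> a"
      using s'(2) a x by (simp flip: s'(3) add: m_assoc)
    also have "\<dots> = \<zero>" using s'(2) a by (simp add: m_assoc)
    finally have "s' \<otimes> (x \<otimes> a) = \<zero>" .
    then show "x \<otimes> a \<in> ass R S" using s' a x by (auto intro: assI)
  next
    fix a x assume "a \<in> ass R S" and x: "x \<in> carrier R"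
    then obtain s where a: "a \<in> carrier R" "s \<in> S" "s \<otimes> a = \<zero>" unfolding ass_def by auto
    have "s \<in> carrier R" using a(2) S_sub by auto
    then have "s \<otimes> (a \<otimes> x) = \<zero>" using a x by (simp flip: m_assoc)
    then show "a \<otimes> x \<in> ass R S" using a x by (auto intro: assI)
  qed
qed

lemma left_ore_surj_image:
  fixes R (structure)
  assumes hom: "\<pi> \<in> ring_hom R B" and surj: "\<pi> ` carrier R = carrier B"
    and S: "left_ore R S" and nz: "\<zero>\<^bsub>B\<^esub> \<notin> \<pi> ` S"
  shows "left_ore B (\<pi> ` S)"
proof -
  note S_sub = mult_subsetD[OF left_ore_mult_subset[OF S]]
  have S_carr: "s \<in> S \<Longrightarrow> s \<in> carrier R" for s using S_sub(1) by blast
  have "mult_subset B (\<pi> ` S)"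
    unfolding mult_subset_def
  proof (intro conjI ballI)
    show "\<pi> ` S \<subseteq> carrier B" using S_carr ring_hom_closed[OF hom] by auto
    show "\<one>\<^bsub>B\<^esub> \<in> \<pi> ` S" using S_sub(2) ring_hom_one[OF hom] by force
    show "\<zero>\<^bsub>B\<^esub> \<notin> \<pi> ` S" by fact
  next
    fix a b assume "a \<in> \<pi> ` S" "b \<in> \<pi> ` S"
    then obtain s t where st: "s \<in> S" "t \<in> S" and "a = \<pi> s" "b = \<pi> t" by auto
    then have "a \<otimes>\<^bsub>B\<^esub> b = \<pi> (s \<otimes> t)" using ring_hom_mult[OF hom] S_carr by simp
    then show "a \<otimes>\<^bsub>B\<^esub> b \<in> \<pi> ` S" using S_sub(4)[OF st] by simp
  qed
  moreover have "\<exists>s'\<in>\<pi> ` S. \<exists>r'\<in>carrier B. s' \<otimes>\<^bsub>B\<^esub> b = r' \<otimes>\<^bsub>B\<^esub> x"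
    if b: "b \<in> carrier B" and x: "x \<in> \<pi> ` S" for b x
  proof -
    obtain r s where r: "r \<in> carrier R" "b = \<pi> r" and s: "s \<in> S" "x = \<pi> s"
      using b x surj by blast
    obtain s' r' where s': "s' \<in> S" "r' \<in> carrier R" "s' \<otimes> r = r' \<otimes> s"
      using left_oreD[OF S r(1) s(1)] by blast
    have "\<pi> s' \<otimes>\<^bsub>B\<^esub> b = \<pi> r' \<otimes>\<^bsub>B\<^esub> x"
      using r s s' S_carr by (simp flip: ring_hom_mult[OF hom])
    then show ?thesis using s' ring_hom_closed[OF hom] by blast
  qed
  ultimately show ?thesis unfolding left_ore_def by blast
qed

lemma left_den_surj_image:
  fixes R (structure)
  assumes hom: "\<pi> \<in> ring_hom R B" and surj: "\<pi> ` carrier R = carrier B"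
    and S: "left_den R S" and nz: "\<zero>\<^bsub>B\<^esub> \<notin> \<pi> ` S"
    and lift: "\<And>r s. r \<in> carrier R \<Longrightarrow> s \<in> S \<Longrightarrow> \<pi> (r \<otimes> s) = \<zero>\<^bsub>B\<^esub> \<Longrightarrow> \<exists>t\<in>S. \<pi> (t \<otimes> r) = \<zero>\<^bsub>B\<^esub>"
  shows "left_den B (\<pi> ` S)"
proof -
  have S_carr: "s \<in> S \<Longrightarrow> s \<in> carrier R" for s
    using mult_subsetD(1)[OF left_den_mult_subset[OF S]] by blast
  have "\<exists>t\<in>\<pi> ` S. t \<otimes>\<^bsub>B\<^esub> b = \<zero>\<^bsub>B\<^esub>"
    if b: "b \<in> carrier B" and x: "x \<in> \<pi> ` S" and bx: "b \<otimes>\<^bsub>B\<^esub> x = \<zero>\<^bsub>B\<^esub>" for b x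
  proof -
    obtain r s where r: "r \<in> carrier R" "b = \<pi> r" and s: "s \<in> S" "x = \<pi> s"
      using b x surj by blast
    then have "\<pi> (r \<otimes> s) = \<zero>\<^bsub>B\<^esub>" using bx S_carr ring_hom_mult[OF hom] by simp
    then obtain t where "t \<in> S" "\<pi> (t \<otimes> r) = \<zero>\<^bsub>B\<^esub>" using lift r s by blast
    then show ?thesis using r S_carr ring_hom_mult[OF hom] by force
  qed
  then show ?thesis
    unfolding left_den_def using left_ore_surj_image[OF hom surj left_den_left_ore[OF S] nz] by blast
qed

section \<open>Left localization maximal rings\<close>

lemma ring_hom_Units:
  assumes f: "f \<in> ring_hom A B" and x: "x \<in> Units A"
  shows "f x \<in> Units B"
proof -
  obtain y where y: "x \<in> carrier A" "y \<in> carrier A" "y \<otimes>\<^bsub>A\<^esub> x = \<one>\<^bsub>A\<^esub>" "x \<otimes>\<^bsub>A\<^esub> y = \<one>\<^bsub>A\<^esub>"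
    using x unfolding Units_def by blast
  then have "f y \<otimes>\<^bsub>B\<^esub> f x = \<one>\<^bsub>B\<^esub>" "f x \<otimes>\<^bsub>B\<^esub> f y = \<one>\<^bsub>B\<^esub>"
    using ring_hom_mult[OF f] ring_hom_one[OF f] by metis+
  then show ?thesis unfolding Units_def using y ring_hom_closed[OF f] by blast
qed

locale ring_isomorphism = ring_hom_ring A B h for A (structure) and B (structure) and h +
  assumes bij: "bij_betw h (carrier A) (carrier B)"
begin

lemma image_carrier: "h ` carrier A = carrier B"
  using bij by (simp add: bij_betw_def)

lemma eq_iff: "x \<in> carrier A \<Longrightarrow> y \<in> carrier A \<Longrightarrow> h x = h y \<longleftrightarrow> x = y"
  using bij unfolding bij_betw_def inj_on_def by auto

lemma eq_zero_iff: "x \<in> carrier A \<Longrightarrow> h x = \<zero>\<^bsub>B\<^esub> \<longleftrightarrow> x = \<zero>"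
  using eq_iff[of x \<zero>] by simp

lemma zero_notin_image: "S \<subseteq> carrier A \<Longrightarrow> \<zero> \<notin> S \<Longrightarrow> \<zero>\<^bsub>B\<^esub> \<notin> h ` S"
  using eq_zero_iff by (force simp: subset_iff)

lemma left_ore_image:
  assumes S: "left_ore A S"
  shows "left_ore B (h ` S)"
proof -
  note S_sub = mult_subsetD[OF left_ore_mult_subset[OF S]]
  show ?thesis
    by (rule left_ore_surj_image[OF homh image_carrier S zero_notin_image[OF S_sub(1,3)]])
qed

lemma left_den_image:
  assumes S: "left_den A S"
  shows "left_den B (h ` S)"
proof (rule left_den_surj_image[OF homh image_carrier S])
  note S_sub = mult_subsetD[OF left_den_mult_subset[OF S]]
  show "\<zero>\<^bsub>B\<^esub> \<notin> h ` S" using zero_notin_image[OF S_sub(1,3)] .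
  fix r s assume r: "r \<in> carrier A" and s: "s \<in> S" and rs: "h (r \<otimes> s) = \<zero>\<^bsub>B\<^esub>"
  have "s \<in> carrier A" using s S_sub(1) by blast
  then have "r \<otimes> s = \<zero>" using rs r eq_zero_iff[of "r \<otimes> s"] by simp
  then obtain t where t: "t \<in> S" "t \<otimes> r = \<zero>" using left_denD[OF S r s] by blast
  then have "h (t \<otimes> r) = \<zero>\<^bsub>B\<^esub>" by simp
  then show "\<exists>t\<in>S. h (t \<otimes> r) = \<zero>\<^bsub>B\<^esub>" using t(1) by blast
qed

lemma regular_image:
  assumes x: "regular A x"
  shows "regular B (h x)"
proof -
  have xc: "x \<in> carrier A" using x by (simp add: regular_def)
  have reg: "r = \<zero>" if "r \<in> carrier A" "x \<otimes> r = \<zero> \<or> r \<otimes> x = \<zero>" for r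
    using x that unfolding regular_def by blast
  have "y = \<zero>\<^bsub>B\<^esub>" if y: "y \<in> carrier B" and yx: "h x \<otimes>\<^bsub>B\<^esub> y = \<zero>\<^bsub>B\<^esub> \<or> y \<otimes>\<^bsub>B\<^esub> h x = \<zero>\<^bsub>B\<^esub>" for y
  proof -
    obtain r where r: "r \<in> carrier A" "y = h r" using y image_carrier by blast
    then have "h (x \<otimes> r) = \<zero>\<^bsub>B\<^esub> \<or> h (r \<otimes> x) = \<zero>\<^bsub>B\<^esub>" using yx xc by simp
    then have "x \<otimes> r = \<zero> \<or> r \<otimes> x = \<zero>"
      using eq_zero_iff[OF R.m_closed[OF xc r(1)]] eq_zero_iff[OF R.m_closed[OF r(1) xc]] by blast
    then have "r = \<zero>" using reg[OF r(1)] by simp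
    then show ?thesis using r(2) by simp
  qed
  moreover have "h x \<in> carrier B" using xc by simp
  ultimately show ?thesis unfolding regular_def by blast
qed

lemma ass_image:
  assumes S: "S \<subseteq> carrier A"
  shows "ass B (h ` S) = h ` ass A S"
proof
  show "ass B (h ` S) \<subseteq> h ` ass A S"
  proof
    fix y assume "y \<in> ass B (h ` S)"
    then obtain s where y: "y \<in> carrier B" and s: "s \<in> S" "h s \<otimes>\<^bsub>B\<^esub> y = \<zero>\<^bsub>B\<^esub>"
      unfolding ass_def by auto
    obtain r where r: "r \<in> carrier A" "y = h r" using y image_carrier by blast
    have sc: "s \<in> carrier A" using s(1) S by blast
    then have "h (s \<otimes> r) = \<zero>\<^bsub>B\<^esub>" using s(2) r by simp
    then have "s \<otimes> r = \<zero>" using eq_zero_iff[OF R.m_closed[OF sc r(1)]] by blast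
    then show "y \<in> h ` ass A S" using r s(1) by (auto intro: assI)
  qed
  show "h ` ass A S \<subseteq> ass B (h ` S)"
  proof
    fix y assume "y \<in> h ` ass A S"
    then obtain r s where r: "r \<in> carrier A" "y = h r" and s: "s \<in> S" "s \<otimes> r = \<zero>"
      unfolding ass_def by blast
    then have "h s \<otimes>\<^bsub>B\<^esub> y = \<zero>\<^bsub>B\<^esub>" using S by (simp flip: hom_mult add: subsetD)
    then show "y \<in> ass B (h ` S)" using r s(1) by (auto intro: assI)
  qed
qed

lemma Units_image: "Units B = h ` Units A"
proof
  show "h ` Units A \<subseteq> Units B" using ring_hom_Units[OF homh] by blast
  show "Units B \<subseteq> h ` Units A"
  proof
    fix y assume "y \<in> Units B"
    then obtain w where y: "y \<in> carrier B" "w \<in> carrier B" "w \<otimes>\<^bsub>B\<^esub> y = \<one>\<^bsub>B\<^esub>" "y \<otimes>\<^bsub>B\<^esub> w = \<one>\<^bsub>B\<^esub>"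
      unfolding Units_def by auto
    obtain x z where x: "x \<in> carrier A" "y = h x" and z: "z \<in> carrier A" "w = h z"
      using y(1,2) image_carrier by blast
    have "h (z \<otimes> x) = h \<one>" "h (x \<otimes> z) = h \<one>" using x z y by auto
    then have "z \<otimes> x = \<one>" "x \<otimes> z = \<one>"
      using eq_iff[OF R.m_closed[OF z(1) x(1)] R.one_closed]
        eq_iff[OF R.m_closed[OF x(1) z(1)] R.one_closed] by blast+
    then show "y \<in> h ` Units A" using x z unfolding Units_def by auto
  qed
qed

end

lemma ring_isomorphismI:
  assumes "ring A" "ring B" "h \<in> ring_iso A B"
  shows "ring_isomorphism A B h"
  using assms unfolding ring_isomorphism_def ring_isomorphism_axioms_def ring_iso_def
    ring_hom_ring_def ring_hom_ring_axioms_def by auto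

lemma left_loc_maximal_one_neq_zero:
  assumes "left_loc_maximal A"
  shows "\<one>\<^bsub>A\<^esub> \<noteq> \<zero>\<^bsub>A\<^esub>"
proof -
  obtain D where "left_den A D"
    using assms unfolding left_loc_maximal_def Den_l_def by blast
  then show ?thesis using mult_subsetD(2,3)[OF left_den_mult_subset] by metis
qed

lemma left_loc_maximal_left_den_Units:
  assumes L: "left_loc_maximal A" and D: "left_den A D"
  shows "D \<subseteq> Units A"
proof -
  interpret A: ring A using L unfolding left_loc_maximal_def by blast
  have ass: "ass A D = {\<zero>\<^bsub>A\<^esub>}" using L D unfolding left_loc_maximal_def Den_l_def by blast
  have "regular A x" if x: "x \<in> D" for x
    unfolding regular_def
  proof (intro conjI ballI impI)
    show xc: "x \<in> carrier A" using x mult_subsetD(1)[OF left_den_mult_subset[OF D]] by blast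
    fix y assume y: "y \<in> carrier A"
    show "y = \<zero>\<^bsub>A\<^esub>" if "x \<otimes>\<^bsub>A\<^esub> y = \<zero>\<^bsub>A\<^esub>"
      using assI[OF y x that] ass by blast
    show "y = \<zero>\<^bsub>A\<^esub>" if "y \<otimes>\<^bsub>A\<^esub> x = \<zero>\<^bsub>A\<^esub>"
      using left_denD[OF D y x that] ass by (auto dest: assI[OF y])
  qed
  then have "D \<subseteq> S0 A" unfolding S0_def using left_den_left_ore[OF D] by blast
  then show ?thesis using L unfolding left_loc_maximal_def by blast
qed

lemma left_loc_maximal_iso:
  assumes L: "left_loc_maximal A" and B: "ring B" and iso: "A \<simeq> B"
  shows "left_loc_maximal B"
proof -
  have A: "ring A" using L unfolding left_loc_maximal_def by blast
  obtain h g where h: "h \<in> ring_iso A B" and g: "g \<in> ring_iso B A"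
    using iso ring_iso_sym[OF A iso] unfolding is_ring_iso_def by blast
  interpret H: ring_isomorphism A B h using ring_isomorphismI[OF A B h] .
  interpret G: ring_isomorphism B A g using ring_isomorphismI[OF B A g] .
  have "x \<in> Units B" if x: "x \<in> S0 B" for x
  proof -
    obtain S where S: "left_ore B S" "S \<subseteq> {x. regular B x}" "x \<in> S"
      using x unfolding S0_def by blast
    then have "g ` S \<subseteq> S0 A"
      unfolding S0_def using G.left_ore_image G.regular_image by blast
    then have "g x \<in> Units A" using S(3) L unfolding left_loc_maximal_def by blast
    then obtain u where u: "u \<in> Units B" "g x = g u" unfolding G.Units_image by blast
    have "x \<in> carrier B" using S(2,3) unfolding regular_def by blast
    moreover have "u \<in> carrier B" using u(1) unfolding Units_def by blast
    ultimately have "x = u" using G.eq_iff u(2) by simp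
    then show ?thesis using u(1) by simp
  qed
  moreover have "ass B D = {\<zero>\<^bsub>B\<^esub>}" if D: "D \<in> Den_l B" for D
  proof -
    have DB: "D \<subseteq> carrier B"
      using D mult_subsetD(1)[OF left_den_mult_subset] unfolding Den_l_def by blast
    have "g ` D \<in> Den_l A" using D G.left_den_image unfolding Den_l_def by blast
    then have "ass A (g ` D) \<in> ass A ` Den_l A" by (rule imageI)
    then have ass_D: "g ` ass B D = {\<zero>\<^bsub>A\<^esub>}"
      using L G.ass_image[OF DB] unfolding left_loc_maximal_def by simp
    have "y = \<zero>\<^bsub>B\<^esub>" if y: "y \<in> ass B D" for y
    proof -
      have "y \<in> carrier B" using y ass_subset[of B D] by blast
      moreover have "g y = \<zero>\<^bsub>A\<^esub>" using y ass_D by blast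
      ultimately show ?thesis using G.eq_zero_iff by simp
    qed
    moreover have "ass B D \<noteq> {}" using ass_D by blast
    ultimately show ?thesis by blast
  qed
  moreover obtain D where "D \<in> Den_l A" using L unfolding left_loc_maximal_def by blast
  then have "h ` D \<in> Den_l B" using H.left_den_image unfolding Den_l_def by blast
  ultimately show ?thesis unfolding left_loc_maximal_def using B by blast
qed

section \<open>Rings decomposed as finite products\<close>

lemma zero_notin_Units:
  assumes "ring A" "\<one>\<^bsub>A\<^esub> \<noteq> \<zero>\<^bsub>A\<^esub>"
  shows "\<zero>\<^bsub>A\<^esub> \<notin> Units A"
proof
  interpret A: ring A by fact
  assume "\<zero>\<^bsub>A\<^esub> \<in> Units A"
  then obtain x where "x \<in> carrier A" "x \<otimes>\<^bsub>A\<^esub> \<zero>\<^bsub>A\<^esub> = \<one>\<^bsub>A\<^esub>"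
    unfolding Units_def by blast
  then show False using assms(2) by simp
qed

locale product_decomposition = ring R for R (structure) +
  fixes n :: nat and B :: "nat \<Rightarrow> ('c,'k) ring_scheme" and \<phi> :: "nat \<Rightarrow> 'a \<Rightarrow> 'c"
  assumes component_ring: "i < n \<Longrightarrow> ring (B i)"
    and component_hom: "i < n \<Longrightarrow> \<phi> i \<in> ring_hom R (B i)"
    and components_surj:
      "(\<And>i. i < n \<Longrightarrow> a i \<in> carrier (B i)) \<Longrightarrow> \<exists>r\<in>carrier R. \<forall>i<n. \<phi> i r = a i"
    and components_eqI:
      "r \<in> carrier R \<Longrightarrow> r' \<in> carrier R \<Longrightarrow> (\<And>i. i < n \<Longrightarrow> \<phi> i r = \<phi> i r') \<Longrightarrow> r = r'"
begin

lemma component_hom_ring: "i < n \<Longrightarrow> ring_hom_ring R (B i) (\<phi> i)"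
  using component_ring component_hom ring_axioms
  unfolding ring_hom_ring_def ring_hom_ring_axioms_def by blast

lemma component_closed [simp]: "i < n \<Longrightarrow> x \<in> carrier R \<Longrightarrow> \<phi> i x \<in> carrier (B i)"
  using ring_hom_closed[OF component_hom] by blast

lemma component_mult [simp]:
  "i < n \<Longrightarrow> x \<in> carrier R \<Longrightarrow> y \<in> carrier R \<Longrightarrow> \<phi> i (x \<otimes> y) = \<phi> i x \<otimes>\<^bsub>B i\<^esub> \<phi> i y"
  using ring_hom_mult[OF component_hom] by blast

lemma component_add [simp]:
  "i < n \<Longrightarrow> x \<in> carrier R \<Longrightarrow> y \<in> carrier R \<Longrightarrow> \<phi> i (x \<oplus> y) = \<phi> i x \<oplus>\<^bsub>B i\<^esub> \<phi> i y"
  using ring_hom_add[OF component_hom] by blast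

lemma component_one [simp]: "i < n \<Longrightarrow> \<phi> i \<one> = \<one>\<^bsub>B i\<^esub>"
  using ring_hom_one[OF component_hom] by blast

lemma component_zero [simp]:
  assumes "i < n"
  shows "\<phi> i \<zero> = \<zero>\<^bsub>B i\<^esub>"
proof -
  interpret ring_hom_ring R "B i" "\<phi> i" using component_hom_ring[OF assms] .
  show ?thesis by simp
qed

lemma component_minus [simp]:
  assumes "i < n" "x \<in> carrier R"
  shows "\<phi> i (\<ominus> x) = \<ominus>\<^bsub>B i\<^esub> \<phi> i x"
proof -
  interpret ring_hom_ring R "B i" "\<phi> i" using component_hom_ring[OF assms(1)] .
  show ?thesis using assms(2) by simp
qed

lemma component_image: "i < n \<Longrightarrow> \<phi> i ` carrier R = carrier (B i)"
proof (intro equalityI subsetI)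
  fix b assume i: "i < n" and b: "b \<in> carrier (B i)"
  obtain r where "r \<in> carrier R" "\<forall>k<n. \<phi> k r = (if k = i then b else \<zero>\<^bsub>B k\<^esub>)"
    using components_surj[of "\<lambda>k. if k = i then b else \<zero>\<^bsub>B k\<^esub>"] b
      ring.ring_simprules(2)[OF component_ring] by force
  then show "b \<in> \<phi> i ` carrier R" using i by force
qed auto

definition idem :: "nat \<Rightarrow> 'a" where
  "idem j = (SOME e. e \<in> carrier R \<and> (\<forall>i<n. \<phi> i e = (if i = j then \<one>\<^bsub>B i\<^esub> else \<zero>\<^bsub>B i\<^esub>)))"

lemma idem:
  assumes "j < n"
  shows idem_closed: "idem j \<in> carrier R"
    and component_idem: "i < n \<Longrightarrow> \<phi> i (idem j) = (if i = j then \<one>\<^bsub>B i\<^esub> else \<zero>\<^bsub>B i\<^esub>)"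
proof -
  have "\<exists>e\<in>carrier R. \<forall>i<n. \<phi> i e = (if i = j then \<one>\<^bsub>B i\<^esub> else \<zero>\<^bsub>B i\<^esub>)"
    by (rule components_surj) (use component_ring ring.ring_simprules(2,6) in auto)
  then have "idem j \<in> carrier R \<and> (\<forall>i<n. \<phi> i (idem j) = (if i = j then \<one>\<^bsub>B i\<^esub> else \<zero>\<^bsub>B i\<^esub>))"
    unfolding idem_def by (rule someI_ex[OF bexE]) blast
  then show "idem j \<in> carrier R" "i < n \<Longrightarrow> \<phi> i (idem j) = (if i = j then \<one>\<^bsub>B i\<^esub> else \<zero>\<^bsub>B i\<^esub>)"
    by blast+
qed

lemma component_idem_mult:
  assumes "i < n" "j < n" "r \<in> carrier R"
  shows "\<phi> i (idem j \<otimes> r) = (if i = j then \<phi> i r else \<zero>\<^bsub>B i\<^esub>)"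
proof -
  interpret Bi: ring "B i" using component_ring[OF assms(1)] .
  interpret Bj: ring "B j" using component_ring[OF assms(2)] .
  show ?thesis using assms idem[OF assms(2)] by (cases "i = j") simp_all
qed

lemma component_eq_zero_iff:
  assumes j: "j < n" and r: "r \<in> carrier R"
  shows "\<phi> j r = \<zero>\<^bsub>B j\<^esub> \<longleftrightarrow> idem j \<otimes> r = \<zero>"
proof
  assume rj: "\<phi> j r = \<zero>\<^bsub>B j\<^esub>"
  have "\<phi> i (idem j \<otimes> r) = \<phi> i \<zero>" if "i < n" for i
    using component_idem_mult[OF that j r] rj that by simp
  then show "idem j \<otimes> r = \<zero>"
    using r idem_closed[OF j] by (intro components_eqI) simp_all
next
  assume "idem j \<otimes> r = \<zero>"
  then show "\<phi> j r = \<zero>\<^bsub>B j\<^esub>" using component_idem_mult[OF j j r] j by simp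
qed


definition units_preimage :: "nat \<Rightarrow> 'a set" where
  "units_preimage j = {r \<in> carrier R. \<phi> j r \<in> Units (B j)}"

lemma idem_in_units_preimage:
  assumes j: "j < n"
  shows "idem j \<in> units_preimage j"
proof -
  interpret Bj: ring "B j" using component_ring[OF j] .
  show ?thesis unfolding units_preimage_def using idem[OF j] j by simp
qed

lemma left_den_units_preimage:
  assumes j: "j < n" and nontriv: "\<one>\<^bsub>B j\<^esub> \<noteq> \<zero>\<^bsub>B j\<^esub>"
  shows "left_den R (units_preimage j)"
proof -
  interpret Bj: ring "B j" using component_ring[OF j] .
  let ?T = "units_preimage j"
  have "\<zero>\<^bsub>B j\<^esub> \<notin> Units (B j)"
    using zero_notin_Units[OF component_ring[OF j] nontriv] .
  then have "mult_subset R ?T"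
    unfolding mult_subset_def units_preimage_def using j by auto
  moreover have "\<exists>s'\<in>?T. \<exists>r'\<in>carrier R. s' \<otimes> r = r' \<otimes> t" if r: "r \<in> carrier R" and t: "t \<in> ?T" for r t
  proof -
    have tc: "t \<in> carrier R" and u: "\<phi> j t \<in> Units (B j)" using t unfolding units_preimage_def by auto
    \<comment> \<open>the witness is concentrated in the j-th factor, where it equals r t^-1\<close>
    obtain r' where r': "r' \<in> carrier R"
      "\<And>i. i < n \<Longrightarrow> \<phi> i r' = (if i = j then \<phi> j r \<otimes>\<^bsub>B j\<^esub> inv\<^bsub>B j\<^esub> (\<phi> j t) else \<zero>\<^bsub>B i\<^esub>)"
      using components_surj[of "\<lambda>i. if i = j then \<phi> j r \<otimes>\<^bsub>B j\<^esub> inv\<^bsub>B j\<^esub> (\<phi> j t) else \<zero>\<^bsub>B i\<^esub>"]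
        j r u component_ring ring.ring_simprules(2) by fastforce
    have "\<phi> i (idem j \<otimes> r) = \<phi> i (r' \<otimes> t)" if i: "i < n" for i
    proof (cases "i = j")
      case True
      then show ?thesis using component_idem_mult[OF i j r] r' i r tc u by (simp add: Bj.m_assoc)
    next
      case False
      interpret Bi: ring "B i" using component_ring[OF i] .
      show ?thesis using component_idem_mult[OF i j r] r' i tc False by simp
    qed
    then have "idem j \<otimes> r = r' \<otimes> t"
      using idem_closed[OF j] r r'(1) tc by (intro components_eqI) simp_all
    then show ?thesis using idem_in_units_preimage[OF j] r'(1) by blast
  qed
  moreover have "\<exists>s\<in>?T. s \<otimes> r = \<zero>" if r: "r \<in> carrier R" and t: "t \<in> ?T" and rt: "r \<otimes> t = \<zero>" for r t
  proof -
    have tc: "t \<in> carrier R" and u: "\<phi> j t \<in> Units (B j)" using t unfolding units_preimage_def by auto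
    have "\<phi> j r \<otimes>\<^bsub>B j\<^esub> \<phi> j t = \<zero>\<^bsub>B j\<^esub>"
      using rt j r tc component_mult[OF j r tc] by simp
    moreover have "\<phi> j r = (\<phi> j r \<otimes>\<^bsub>B j\<^esub> \<phi> j t) \<otimes>\<^bsub>B j\<^esub> inv\<^bsub>B j\<^esub> (\<phi> j t)"
      using u j r by (simp add: Bj.m_assoc Bj.Units_closed)
    ultimately have "\<phi> j r = \<zero>\<^bsub>B j\<^esub>" using u by simp
    then show ?thesis using component_eq_zero_iff[OF j r] idem_in_units_preimage[OF j] by blast
  qed
  ultimately show ?thesis unfolding left_den_def left_ore_def by blast
qed

lemma ass_units_preimage:
  assumes j: "j < n"
  shows "ass R (units_preimage j) = {r \<in> carrier R. \<phi> j r = \<zero>\<^bsub>B j\<^esub>}"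
proof (intro equalityI subsetI)
  interpret Bj: ring "B j" using component_ring[OF j] .
  fix r assume "r \<in> ass R (units_preimage j)"
  then obtain t where r: "r \<in> carrier R" and t: "t \<in> carrier R" "\<phi> j t \<in> Units (B j)" "t \<otimes> r = \<zero>"
    unfolding ass_def units_preimage_def by blast
  have "\<phi> j t \<otimes>\<^bsub>B j\<^esub> \<phi> j r = \<zero>\<^bsub>B j\<^esub>"
    using component_mult[OF j t(1) r] t(3) j by simp
  moreover have "\<phi> j r = inv\<^bsub>B j\<^esub> (\<phi> j t) \<otimes>\<^bsub>B j\<^esub> (\<phi> j t \<otimes>\<^bsub>B j\<^esub> \<phi> j r)"
    using t(2) j r by (simp add: Bj.m_assoc[symmetric] Bj.Units_closed)
  ultimately have "\<phi> j r = \<zero>\<^bsub>B j\<^esub>" using t(2) by simp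
  then show "r \<in> {r \<in> carrier R. \<phi> j r = \<zero>\<^bsub>B j\<^esub>}" using r by blast
next
  fix r assume "r \<in> {r \<in> carrier R. \<phi> j r = \<zero>\<^bsub>B j\<^esub>}"
  then have "r \<in> carrier R" "idem j \<otimes> r = \<zero>" using component_eq_zero_iff[OF j] by auto
  then show "r \<in> ass R (units_preimage j)" using assI idem_in_units_preimage[OF j] by metis
qed

lemma left_den_subset_units_preimage:
  assumes j: "j < n" and L: "left_loc_maximal (B j)" and S: "left_den R S"
    and nz: "\<zero>\<^bsub>B j\<^esub> \<notin> \<phi> j ` S"
  shows "S \<subseteq> units_preimage j"
proof -
  interpret Bj: ring "B j" using component_ring[OF j] .
  have S_carr: "s \<in> S \<Longrightarrow> s \<in> carrier R" for s
    using mult_subsetD(1)[OF left_den_mult_subset[OF S]] by blast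
  have "left_den (B j) (\<phi> j ` S)"
  proof (rule left_den_surj_image[OF component_hom[OF j] component_image[OF j] S nz])
    fix r s assume r: "r \<in> carrier R" and s: "s \<in> S" and rs: "\<phi> j (r \<otimes> s) = \<zero>\<^bsub>B j\<^esub>"
    have er: "idem j \<otimes> r \<in> carrier R" using idem_closed[OF j] r by simp
    have "(idem j \<otimes> r) \<otimes> s = \<zero>"
      using component_eq_zero_iff[OF j m_closed[OF r S_carr[OF s]]] rs idem_closed[OF j] r S_carr[OF s]
      by (simp add: m_assoc)
    then obtain t where t: "t \<in> S" "t \<otimes> (idem j \<otimes> r) = \<zero>" using left_denD[OF S er s] by blast
    have "\<phi> j (t \<otimes> r) = \<phi> j (t \<otimes> (idem j \<otimes> r))"
      using component_idem_mult[OF j j r] j r S_carr[OF t(1)] er by simp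
    then show "\<exists>t\<in>S. \<phi> j (t \<otimes> r) = \<zero>\<^bsub>B j\<^esub>" using t j by auto
  qed
  then have "\<phi> j ` S \<subseteq> Units (B j)" using left_loc_maximal_left_den_Units[OF L] by blast
  then show ?thesis unfolding units_preimage_def using S_carr by blast
qed

lemma mult_subset_common_zero:
  assumes S: "mult_subset R S" and zero: "\<And>j. j < n \<Longrightarrow> \<exists>s\<in>S. \<phi> j s = \<zero>\<^bsub>B j\<^esub>"
  shows "\<exists>s\<in>S. \<forall>i<n. \<phi> i s = \<zero>\<^bsub>B i\<^esub>"
proof -
  note S_sub = mult_subsetD[OF S]
  have "\<exists>s\<in>S. \<forall>i<m. \<phi> i s = \<zero>\<^bsub>B i\<^esub>" if "m \<le> n" for m
    using that
  proof (induction m)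
    case 0
    show ?case using S_sub(2) by blast
  next
    case (Suc m)
    obtain s where s: "s \<in> S" "\<And>i. i < m \<Longrightarrow> \<phi> i s = \<zero>\<^bsub>B i\<^esub>" using Suc by auto
    have "m < n" using Suc.prems by simp
    then obtain s' where s': "s' \<in> S" "\<phi> m s' = \<zero>\<^bsub>B m\<^esub>" using zero by blast
    have "\<phi> i (s \<otimes> s') = \<zero>\<^bsub>B i\<^esub>" if i: "i < Suc m" for i
    proof -
      have "i < n" using i Suc.prems by simp
      interpret Bi: ring "B i" using component_ring[OF \<open>i < n\<close>] .
      have "s \<in> carrier R" "s' \<in> carrier R" using s(1) s'(1) S_sub(1) by blast+
      then have "\<phi> i (s \<otimes> s') = \<phi> i s \<otimes>\<^bsub>B i\<^esub> \<phi> i s'"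
        and "\<phi> i s \<in> carrier (B i)" "\<phi> i s' \<in> carrier (B i)" using \<open>i < n\<close> by simp_all
      moreover have "\<phi> i s = \<zero>\<^bsub>B i\<^esub> \<or> \<phi> i s' = \<zero>\<^bsub>B i\<^esub>"
        using s(2) s'(2) i less_Suc_eq by auto
      ultimately show ?thesis by auto
    qed
    then show ?case using S_sub(4)[OF s(1) s'(1)] by blast
  qed
  then show ?thesis by blast
qed

lemma left_den_subset_some_units_preimage:
  assumes L: "\<And>i. i < n \<Longrightarrow> left_loc_maximal (B i)" and S: "left_den R S"
  shows "\<exists>j<n. S \<subseteq> units_preimage j"
proof (rule ccontr)
  assume none: "\<not> (\<exists>j<n. S \<subseteq> units_preimage j)"
  note S_sub = mult_subsetD[OF left_den_mult_subset[OF S]]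
  \<comment> \<open>otherwise S meets every kernel, and a product of such elements vanishes in all factors\<close>
  have "\<exists>s\<in>S. \<phi> j s = \<zero>\<^bsub>B j\<^esub>" if j: "j < n" for j
  proof -
    have "\<not> S \<subseteq> units_preimage j" using none j by blast
    then have "\<zero>\<^bsub>B j\<^esub> \<in> \<phi> j ` S" using left_den_subset_units_preimage[OF j L[OF j] S] by blast
    then obtain s where "s \<in> S" "\<zero>\<^bsub>B j\<^esub> = \<phi> j s" by (rule imageE)
    then show ?thesis by auto
  qed
  then obtain s where s: "s \<in> S" "\<And>i. i < n \<Longrightarrow> \<phi> i s = \<zero>\<^bsub>B i\<^esub>"
    using mult_subset_common_zero[OF left_den_mult_subset[OF S]] by blast
  then have "s = \<zero>" using S_sub(1) by (intro components_eqI) auto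
  then show False using s(1) S_sub(3) by blast
qed

lemma units_preimage_not_subset:
  assumes "j < n" "k < n" "j \<noteq> k" and nontriv: "\<one>\<^bsub>B k\<^esub> \<noteq> \<zero>\<^bsub>B k\<^esub>"
  shows "\<not> units_preimage j \<subseteq> units_preimage k"
proof
  assume "units_preimage j \<subseteq> units_preimage k"
  then have "\<phi> k (idem j) \<in> Units (B k)"
    using idem_in_units_preimage[OF assms(1)] unfolding units_preimage_def by blast
  then show False
    using idem(2)[OF assms(1,2)] assms(3) zero_notin_Units[OF component_ring[OF assms(2)] nontriv] by simp
qed

lemma maxDen_l_eq_units_preimages:
  assumes L: "\<And>i. i < n \<Longrightarrow> left_loc_maximal (B i)"
  shows "maxDen_l R = units_preimage ` {..<n}"
proof
  have den: "units_preimage j \<in> Den_l R" if "j < n" for j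
    using left_den_units_preimage[OF that left_loc_maximal_one_neq_zero[OF L[OF that]]]
    unfolding Den_l_def by blast
  show "maxDen_l R \<subseteq> units_preimage ` {..<n}"
  proof
    fix S assume S: "S \<in> maxDen_l R"
    then obtain j where j: "j < n" "S \<subseteq> units_preimage j"
      using left_den_subset_some_units_preimage[OF L] unfolding maxDen_l_def Den_l_def by blast
    then have "units_preimage j = S" using S den[OF j(1)] unfolding maxDen_l_def by blast
    then show "S \<in> units_preimage ` {..<n}" using j(1) by blast
  qed
  show "units_preimage ` {..<n} \<subseteq> maxDen_l R"
  proof
    fix S assume "S \<in> units_preimage ` {..<n}"
    then obtain j where j: "j < n" and S: "S = units_preimage j" by blast
    have "U = S" if U: "U \<in> Den_l R" "S \<subseteq> U" for U
    proof -
      obtain k where k: "k < n" "U \<subseteq> units_preimage k"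
        using left_den_subset_some_units_preimage[OF L] U(1) unfolding Den_l_def by blast
      then have "k = j"
        using units_preimage_not_subset[OF j k(1) _ left_loc_maximal_one_neq_zero[OF L[OF k(1)]]]
          U(2) S by blast
      then show "U = S" using U(2) k(2) S by blast
    qed
    then show "S \<in> maxDen_l R" unfolding maxDen_l_def using den[OF j] S by blast
  qed
qed

lemma loc_radical_eq_zero:
  assumes L: "\<And>i. i < n \<Longrightarrow> left_loc_maximal (B i)"
  shows "loc_radical R = {\<zero>}"
proof
  show "loc_radical R \<subseteq> {\<zero>}"
  proof
    fix r assume "r \<in> loc_radical R"
    then have r: "r \<in> carrier R" "\<And>j. j < n \<Longrightarrow> r \<in> ass R (units_preimage j)"
      by (simp_all add: loc_radical_def maxDen_l_eq_units_preimages[OF L])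
    have "r = \<zero>" using r ass_units_preimage by (intro components_eqI) auto
    then show "r \<in> {\<zero>}" by simp
  qed
  show "{\<zero>} \<subseteq> loc_radical R"
    using ass_units_preimage by (auto simp: loc_radical_def maxDen_l_eq_units_preimages[OF L])
qed

lemma ass_units_preimage_comaximal:
  assumes i: "i < n" and j: "j < n" and ij: "i \<noteq> j"
  shows "ass R (units_preimage i) <+>\<^bsub>R\<^esub> ass R (units_preimage j) = carrier R"
proof
  show "ass R (units_preimage i) <+>\<^bsub>R\<^esub> ass R (units_preimage j) \<subseteq> carrier R"
    unfolding set_add_def' using ass_subset by fastforce
  show "carrier R \<subseteq> ass R (units_preimage i) <+>\<^bsub>R\<^esub> ass R (units_preimage j)"
  proof
    fix r assume r: "r \<in> carrier R"
    interpret Bi: ring "B i" using component_ring[OF i] .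
    define b where "b = idem i \<otimes> r"
    have bc: "b \<in> carrier R" unfolding b_def using idem_closed[OF i] r by simp
    have "\<phi> j b = \<zero>\<^bsub>B j\<^esub>" unfolding b_def using component_idem_mult[OF j i r] ij by simp
    then have b: "b \<in> ass R (units_preimage j)" using ass_units_preimage[OF j] bc by blast
    have "\<phi> i (r \<ominus> b) = \<zero>\<^bsub>B i\<^esub>"
      unfolding b_def minus_eq using component_idem_mult[OF i i r] i r idem_closed[OF i]
      by (simp add: Bi.r_neg)
    then have a: "r \<ominus> b \<in> ass R (units_preimage i)"
      using ass_units_preimage[OF i] r bc by simp
    have "r = (r \<ominus> b) \<oplus> b" using r bc by algebra
    then show "r \<in> ass R (units_preimage i) <+>\<^bsub>R\<^esub> ass R (units_preimage j)"
      unfolding set_add_def' using a b by blast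
  qed
qed

lemma quotient_ass_units_preimage_iso:
  assumes i: "i < n"
  shows "ring (R Quot ass R (units_preimage i))" and "R Quot ass R (units_preimage i) \<simeq> B i"
proof -
  interpret h: ring_hom_ring R "B i" "\<phi> i" using component_hom_ring[OF i] .
  have ker: "a_kernel R (B i) (\<phi> i) = ass R (units_preimage i)"
    unfolding a_kernel_def' ass_units_preimage[OF i] ..
  show "ring (R Quot ass R (units_preimage i))"
    using ideal.quotient_is_ring[OF h.kernel_is_ideal] unfolding ker .
  show "R Quot ass R (units_preimage i) \<simeq> B i"
    using h.FactRing_iso[OF component_image[OF i]] unfolding ker .
qed

lemma conds_units_preimage:
  assumes L: "\<And>i. i < n \<Longrightarrow> left_loc_maximal (B i)"
  shows "conds R n units_preimage"
proof -
  have "inj_on units_preimage {..<n}"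
    using units_preimage_not_subset left_loc_maximal_one_neq_zero[OF L]
    by (intro inj_onI) (metis lessThan_iff order_refl)
  moreover have "left_loc_maximal (R Quot ass R (units_preimage i))" if i: "i < n" for i
    using left_loc_maximal_iso[OF L[OF i] quotient_ass_units_preimage_iso(1)[OF i]]
      ring_iso_sym[OF quotient_ass_units_preimage_iso[OF i]] by blast
  ultimately show ?thesis
    unfolding conds_def using maxDen_l_eq_units_preimages[OF L] loc_radical_eq_zero[OF L]
      ass_units_preimage_comaximal by blast
qed

abbreviation product_map :: "'a \<Rightarrow> nat \<Rightarrow> 'c" where
  "product_map r \<equiv> \<lambda>i\<in>{..<n}. \<phi> i r"

lemma product_map_closed: "x \<in> carrier R \<Longrightarrow> product_map x \<in> carrier (prod_ring n B)"
  by (simp add: prod_ring_def)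

lemma product_map_image: "product_map ` carrier R = carrier (prod_ring n B)"
proof (intro equalityI subsetI)
  fix f assume f: "f \<in> carrier (prod_ring n B)"
  have fP: "f \<in> (\<Pi>\<^sub>E i\<in>{..<n}. carrier (B i))" using f by (simp add: prod_ring_def)
  then obtain r where r: "r \<in> carrier R" "\<And>i. i < n \<Longrightarrow> \<phi> i r = f i"
    using components_surj[of f] by auto
  have "product_map r = restrict f {..<n}" using r(2) by (intro restrict_ext) simp
  also have "\<dots> = f" using fP by (simp add: PiE_restrict)
  finally show "f \<in> product_map ` carrier R" using r(1) by blast
qed (use product_map_closed in blast)

lemma product_map_iso: "product_map \<in> ring_iso R (prod_ring n B)"
proof (rule ring_iso_memI)
  fix x y assume x: "x \<in> carrier R" and y: "y \<in> carrier R"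
  show "product_map x \<in> carrier (prod_ring n B)" using product_map_closed[OF x] .
  show "product_map (x \<otimes> y) = product_map x \<otimes>\<^bsub>prod_ring n B\<^esub> product_map y"
    using x y by (auto simp: prod_ring_def intro!: restrict_ext)
  show "product_map (x \<oplus> y) = product_map x \<oplus>\<^bsub>prod_ring n B\<^esub> product_map y"
    using x y by (auto simp: prod_ring_def intro!: restrict_ext)
next
  show "product_map \<one> = \<one>\<^bsub>prod_ring n B\<^esub>" by (auto simp: prod_ring_def intro!: restrict_ext)
next
  have "inj_on product_map (carrier R)"
  proof (rule inj_onI)
    fix x y assume "x \<in> carrier R" "y \<in> carrier R" "product_map x = product_map y"
    then show "x = y" by (intro components_eqI) (metis lessThan_iff restrict_apply')+
  qed
  then show "bij_betw product_map (carrier R) (carrier (prod_ring n B))"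
    unfolding bij_betw_def using product_map_image by blast
qed

lemma product_map_image_component:
  assumes j: "j < n"
  shows "product_map ` {r \<in> carrier R. P (\<phi> j r)} = {f \<in> carrier (prod_ring n B). P (f j)}"
proof (intro equalityI subsetI)
  fix f assume "f \<in> product_map ` {r \<in> carrier R. P (\<phi> j r)}"
  then obtain r where "r \<in> carrier R" "P (\<phi> j r)" "f = product_map r" by blast
  then show "f \<in> {f \<in> carrier (prod_ring n B). P (f j)}" using product_map_closed j by simp
next
  fix f assume f: "f \<in> {f \<in> carrier (prod_ring n B). P (f j)}"
  then have "f \<in> product_map ` carrier R" using product_map_image by blast
  then obtain r where r: "r \<in> carrier R" "f = product_map r" by (rule imageE)
  then have "P (\<phi> j r)" using f j by simp
  then show "f \<in> product_map ` {r \<in> carrier R. P (\<phi> j r)}" using r by blast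
qed

end


lemma product_decomposition_of_iso:
  fixes R (structure)
  assumes R: "ring R" and A: "\<And>i. i < n \<Longrightarrow> ring (A i)" and h: "h \<in> ring_iso R (prod_ring n A)"
  shows "product_decomposition R n A (\<lambda>i r. h r i)"
proof -
  interpret ring R by fact
  have hom: "h \<in> ring_hom R (prod_ring n A)" and bij: "bij_betw h (carrier R) (carrier (prod_ring n A))"
    using h unfolding ring_iso_def by auto
  have closed: "h x \<in> (\<Pi>\<^sub>E i\<in>{..<n}. carrier (A i))" if "x \<in> carrier R" for x
    using ring_hom_closed[OF hom that] by (simp add: prod_ring_def)
  show ?thesis
  proof (intro product_decomposition.intro[OF R] product_decomposition_axioms.intro)
    fix i assume i: "i < n"
    show "ring (A i)" using A[OF i] .
    show "(\<lambda>r. h r i) \<in> ring_hom R (A i)"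
    proof (rule ring_hom_memI)
      fix x y assume x: "x \<in> carrier R" and y: "y \<in> carrier R"
      show "h x i \<in> carrier (A i)" using closed[OF x] i by auto
      show "h (x \<otimes> y) i = h x i \<otimes>\<^bsub>A i\<^esub> h y i"
        using ring_hom_mult[OF hom x y] i by (simp add: prod_ring_def)
      show "h (x \<oplus> y) i = h x i \<oplus>\<^bsub>A i\<^esub> h y i"
        using ring_hom_add[OF hom x y] i by (simp add: prod_ring_def)
    next
      show "h \<one> i = \<one>\<^bsub>A i\<^esub>" using ring_hom_one[OF hom] i by (simp add: prod_ring_def)
    qed
  next
    fix a assume a: "\<And>i. i < n \<Longrightarrow> a i \<in> carrier (A i)"
    have "restrict a {..<n} \<in> carrier (prod_ring n A)" using a by (simp add: prod_ring_def)
    then obtain r where r: "r \<in> carrier R" "h r = restrict a {..<n}"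
      using bij unfolding bij_betw_def by (metis imageE)
    then have "\<forall>i<n. h r i = a i" by simp
    then show "\<exists>r\<in>carrier R. \<forall>i<n. h r i = a i" using r(1) by blast
  next
    fix r r' assume r: "r \<in> carrier R" and r': "r' \<in> carrier R" and eq: "\<And>i. i < n \<Longrightarrow> h r i = h r' i"
    have "h r = h r'" using closed[OF r] closed[OF r'] eq by (intro PiE_ext) auto
    then show "r = r'" using bij r r' unfolding bij_betw_def inj_on_def by blast
  qed
qed

lemma conds_of_product_iso:
  fixes R :: "('a,'m) ring_scheme" and A :: "nat \<Rightarrow> ('b,'k) ring_scheme"
  assumes R: "ring R" and L: "\<forall>i<n. left_loc_maximal (A i)" and iso: "R \<simeq> prod_ring n A"
  shows "\<exists>S. conds R n S"
proof -
  obtain h where h: "h \<in> ring_iso R (prod_ring n A)" using iso unfolding is_ring_iso_def by blast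
  have "\<And>i. i < n \<Longrightarrow> ring (A i)" using L unfolding left_loc_maximal_def by blast
  then interpret product_decomposition R n A "\<lambda>i r. h r i"
    using product_decomposition_of_iso[OF R _ h] by blast
  show ?thesis using conds_units_preimage L by blast
qed

section \<open>Left localizations and the Chinese remainder theorem\<close>

lemma (in ideal) rcos_image_carrier: "(+>) I ` carrier R = carrier (R Quot I)"
  by (auto simp add: FactRing_def A_RCOSETS_def')

lemma (in ideal) rcos_kernel: "{r \<in> carrier R. I +> r = \<zero>\<^bsub>R Quot I\<^esub>} = I"
proof (intro equalityI subsetI)
  fix r assume "r \<in> {r \<in> carrier R. I +> r = \<zero>\<^bsub>R Quot I\<^esub>}"
  then show "r \<in> I" using rcos_const_imp_mem unfolding FactRing_def by simp
next
  fix r assume "r \<in> I"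
  then show "r \<in> {r \<in> carrier R. I +> r = \<zero>\<^bsub>R Quot I\<^esub>}"
    using a_rcos_zero[OF is_ideal] Icarr unfolding FactRing_def by simp
qed

lemma left_den_image_Units:
  fixes R (structure)
  assumes R: "ring R" and hom: "\<pi> \<in> ring_hom R Q" and surj: "\<pi> ` carrier R = carrier Q"
    and ker: "{r \<in> carrier R. \<pi> r = \<zero>\<^bsub>Q\<^esub>} = ass R S"
    and S: "left_den R S" and L: "left_loc_maximal Q"
  shows "\<pi> ` S \<subseteq> Units Q"
proof -
  interpret ring R by fact
  note S_sub = mult_subsetD[OF left_den_mult_subset[OF S]]
  have "\<zero>\<^bsub>Q\<^esub> \<notin> \<pi> ` S"
  proof
    assume "\<zero>\<^bsub>Q\<^esub> \<in> \<pi> ` S"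
    then obtain s where s: "s \<in> S" "\<pi> s = \<zero>\<^bsub>Q\<^esub>" by force
    then have "s \<in> ass R S" using ker S_sub(1) by blast
    then obtain t where "t \<in> S" "t \<otimes> s = \<zero>" unfolding ass_def by blast
    then show False using S_sub(3,4) s(1) by metis
  qed
  moreover have "\<exists>t\<in>S. \<pi> (t \<otimes> r) = \<zero>\<^bsub>Q\<^esub>"
    if r: "r \<in> carrier R" and s: "s \<in> S" and rs: "\<pi> (r \<otimes> s) = \<zero>\<^bsub>Q\<^esub>" for r s
  proof -
    have sc: "s \<in> carrier R" using s S_sub(1) by blast
    have "r \<otimes> s \<in> ass R S" using ker r sc rs by blast
    then obtain t where t: "t \<in> S" "t \<otimes> (r \<otimes> s) = \<zero>" unfolding ass_def by blast
    have tc: "t \<in> carrier R" using t(1) S_sub(1) by blast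
    have "(t \<otimes> r) \<otimes> s = \<zero>" using t(2) tc r sc by (simp add: m_assoc)
    then obtain t' where "t' \<in> S" "t' \<otimes> (t \<otimes> r) = \<zero>" using left_denD[OF S _ s] tc r by blast
    then have "t \<otimes> r \<in> ass R S" using tc r by (intro assI) simp_all
    then show ?thesis using ker t(1) by blast
  qed
  ultimately have "left_den Q (\<pi> ` S)" by (rule left_den_surj_image[OF hom surj S])
  then show ?thesis using left_loc_maximal_left_den_Units[OF L] by blast
qed

lemma quotient_is_left_localization:
  fixes R (structure)
  assumes R: "ring R" and S: "left_den R S" and L: "left_loc_maximal (R Quot ass R S)"
  shows "is_left_localization R S (R Quot ass R S) ((+>) (ass R S))"
proof -
  interpret I: ideal "ass R S" R using ass_ideal[OF R left_den_left_ore[OF S]] .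
  interpret Q: ring "R Quot ass R S" using I.quotient_is_ring .
  have "\<exists>s\<in>S. \<exists>r\<in>carrier R. q = inv\<^bsub>R Quot ass R S\<^esub> (ass R S +> s) \<otimes>\<^bsub>R Quot ass R S\<^esub> (ass R S +> r)"
    if q: "q \<in> carrier (R Quot ass R S)" for q
  proof -
    obtain r where r: "r \<in> carrier R" "q = ass R S +> r"
      using q I.rcos_image_carrier by blast
    have "ass R S +> \<one> = \<one>\<^bsub>R Quot ass R S\<^esub>" using ring_hom_one[OF I.rcos_ring_hom] .
    then have "q = inv\<^bsub>R Quot ass R S\<^esub> (ass R S +> \<one>) \<otimes>\<^bsub>R Quot ass R S\<^esub> (ass R S +> r)"
      using q r by simp
    then show ?thesis using r(1) mult_subsetD(2)[OF left_den_mult_subset[OF S]] by blast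
  qed
  then show ?thesis
    unfolding is_left_localization_def
    using Q.ring_axioms I.rcos_ring_hom I.rcos_kernel
      left_den_image_Units[OF R I.rcos_ring_hom I.rcos_image_carrier I.rcos_kernel S L] by blast
qed

lemma left_localization_image_carrier:
  fixes R (structure)
  assumes R: "ring R" and S: "left_den R S" and L: "left_loc_maximal (R Quot ass R S)"
    and loc: "is_left_localization R S Q \<sigma>"
  shows "\<sigma> ` carrier R = carrier Q"
proof -
  interpret ring R by fact
  interpret I: ideal "ass R S" R using ass_ideal[OF R left_den_left_ore[OF S]] .
  have Q: "ring Q" and hom: "\<sigma> \<in> ring_hom R Q" and units: "\<sigma> ` S \<subseteq> Units Q"
    and frac: "\<And>q. q \<in> carrier Q \<Longrightarrow> \<exists>s\<in>S. \<exists>r\<in>carrier R. q = inv\<^bsub>Q\<^esub> (\<sigma> s) \<otimes>\<^bsub>Q\<^esub> \<sigma> r"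
    and ker: "{r \<in> carrier R. \<sigma> r = \<zero>\<^bsub>Q\<^esub>} = ass R S"
    using loc unfolding is_left_localization_def by auto
  interpret h: ring_hom_ring R Q \<sigma> using ring_hom_ringI2[OF R Q hom] .
  have ker': "a_kernel R Q \<sigma> = ass R S" unfolding a_kernel_def' using ker .
  note S_sub = mult_subsetD[OF left_den_mult_subset[OF S]]
  \<comment> \<open>the inverse of s in the left localization maximal ring R/ass(S) lifts to R\<close>
  have inv_image: "inv\<^bsub>Q\<^esub> (\<sigma> s) \<in> \<sigma> ` carrier R" if s: "s \<in> S" for s
  proof -
    have sc: "s \<in> carrier R" using s S_sub(1) by blast
    have "ass R S +> s \<in> Units (R Quot ass R S)"
      using left_den_image_Units[OF R I.rcos_ring_hom I.rcos_image_carrier I.rcos_kernel S L] s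
      by blast
    then obtain Y where Y: "Y \<in> carrier (R Quot ass R S)"
      "Y \<otimes>\<^bsub>R Quot ass R S\<^esub> (ass R S +> s) = \<one>\<^bsub>R Quot ass R S\<^esub>"
      unfolding Units_def by blast
    obtain s' where s': "s' \<in> carrier R" "Y = ass R S +> s'" using Y(1) I.rcos_image_carrier by blast
    have "ass R S +> (s' \<otimes> s) = ass R S +> \<one>"
      using Y(2) s' sc ring_hom_mult[OF I.rcos_ring_hom] ring_hom_one[OF I.rcos_ring_hom] by simp
    then have "s' \<otimes> s \<in> a_kernel R Q \<sigma> +> \<one>"
      unfolding ker' using I.a_rcos_self[of "s' \<otimes> s"] s'(1) sc by simp
    then have "\<sigma> (s' \<otimes> s) = \<sigma> \<one>" by (rule h.rcos_imp_homeq[OF one_closed])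
    then have "\<sigma> s' \<otimes>\<^bsub>Q\<^esub> \<sigma> s = \<one>\<^bsub>Q\<^esub>" using s'(1) sc by simp
    moreover have "\<sigma> s \<in> Units Q" using units s by blast
    ultimately have "\<sigma> s' = inv\<^bsub>Q\<^esub> (\<sigma> s)"
      using h.S.inv_unique[where x="\<sigma> s" and y="\<sigma> s'" and y'="inv\<^bsub>Q\<^esub> (\<sigma> s)"] s'(1) sc by simp
    then show ?thesis using s'(1) by (metis imageI)
  qed
  show ?thesis
  proof (intro equalityI subsetI)
    fix q assume "q \<in> carrier Q"
    then obtain s r where s: "s \<in> S" and r: "r \<in> carrier R" and q: "q = inv\<^bsub>Q\<^esub> (\<sigma> s) \<otimes>\<^bsub>Q\<^esub> \<sigma> r"
      using frac by blast
    obtain s' where "s' \<in> carrier R" "inv\<^bsub>Q\<^esub> (\<sigma> s) = \<sigma> s'" using inv_image[OF s] by blast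
    then have "q = \<sigma> (s' \<otimes> r)" using q r by simp
    then show "q \<in> \<sigma> ` carrier R" using \<open>s' \<in> carrier R\<close> r by blast
  qed auto
qed

lemma comaximal_kernels_separating_element:
  fixes R (structure) and n :: nat
  assumes R: "ring R" and hom: "\<And>i. i < n \<Longrightarrow> ring_hom_ring R (Q i) (\<sigma> i)"
    and ker: "\<And>i. i < n \<Longrightarrow> {r \<in> carrier R. \<sigma> i r = \<zero>\<^bsub>Q i\<^esub>} = I i"
    and comax: "\<And>i j. i < n \<Longrightarrow> j < n \<Longrightarrow> i \<noteq> j \<Longrightarrow> I i <+>\<^bsub>R\<^esub> I j = carrier R"
    and j: "j < n"
  shows "\<exists>e\<in>carrier R. \<sigma> j e = \<one>\<^bsub>Q j\<^esub> \<and> (\<forall>i<n. i \<noteq> j \<longrightarrow> \<sigma> i e = \<zero>\<^bsub>Q i\<^esub>)"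
proof -
  interpret ring R by fact
  interpret hj: ring_hom_ring R "Q j" "\<sigma> j" using hom[OF j] .
  have "\<exists>e\<in>carrier R. \<sigma> j e = \<one>\<^bsub>Q j\<^esub> \<and> (\<forall>i<m. i \<noteq> j \<longrightarrow> \<sigma> i e = \<zero>\<^bsub>Q i\<^esub>)" if "m \<le> n" for m
    using that
  proof (induction m)
    case 0
    show ?case using one_closed by force
  next
    case (Suc m)
    then have m: "m < n" by simp
    obtain e where e: "e \<in> carrier R" "\<sigma> j e = \<one>\<^bsub>Q j\<^esub>" "\<And>i. i < m \<Longrightarrow> i \<noteq> j \<Longrightarrow> \<sigma> i e = \<zero>\<^bsub>Q i\<^esub>"
      using Suc by auto
    show ?case
    proof (cases "m = j")
      case True
      then show ?thesis using e by (auto simp: less_Suc_eq)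
    next
      case False
      interpret hm: ring_hom_ring R "Q m" "\<sigma> m" using hom[OF m] .
      \<comment> \<open>split 1 = x + y with x in the j-th and y in the m-th kernel; then y is 1 in the j-th factor\<close>
      obtain x y where xy: "x \<in> I j" "y \<in> I m" "\<one> = x \<oplus> y"
        using comax[OF j m] False one_closed unfolding set_add_def' by blast
      have x: "x \<in> carrier R" "\<sigma> j x = \<zero>\<^bsub>Q j\<^esub>" using xy(1) ker[OF j] by blast+
      have y: "y \<in> carrier R" "\<sigma> m y = \<zero>\<^bsub>Q m\<^esub>" using xy(2) ker[OF m] by blast+
      have "\<sigma> j y = \<sigma> j (x \<oplus> y)" using x y by simp
      also have "\<dots> = \<one>\<^bsub>Q j\<^esub>" unfolding xy(3)[symmetric] by simp
      finally have "\<sigma> j y = \<one>\<^bsub>Q j\<^esub>" .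
      then have "\<sigma> j (e \<otimes> y) = \<one>\<^bsub>Q j\<^esub>" using e(1,2) y(1) by simp
      moreover have "\<sigma> i (e \<otimes> y) = \<zero>\<^bsub>Q i\<^esub>" if i: "i < Suc m" "i \<noteq> j" for i
      proof -
        interpret hi: ring_hom_ring R "Q i" "\<sigma> i" using hom i m by simp
        show ?thesis
        proof (cases "i = m")
          case True
          then show ?thesis using e(1) y by simp
        next
          case False
          then show ?thesis using e y(1) i by simp
        qed
      qed
      ultimately show ?thesis using e(1) y(1) by blast
    qed
  qed
  then show ?thesis by blast
qed

lemma chinese_remainder:
  fixes R (structure) and n :: nat
  assumes R: "ring R" and hom: "\<And>i. i < n \<Longrightarrow> ring_hom_ring R (Q i) (\<sigma> i)"
    and surj: "\<And>i. i < n \<Longrightarrow> \<sigma> i ` carrier R = carrier (Q i)"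
    and ker: "\<And>i. i < n \<Longrightarrow> {r \<in> carrier R. \<sigma> i r = \<zero>\<^bsub>Q i\<^esub>} = I i"
    and comax: "\<And>i j. i < n \<Longrightarrow> j < n \<Longrightarrow> i \<noteq> j \<Longrightarrow> I i <+>\<^bsub>R\<^esub> I j = carrier R"
    and a: "\<And>i. i < n \<Longrightarrow> a i \<in> carrier (Q i)"
  shows "\<exists>r\<in>carrier R. \<forall>i<n. \<sigma> i r = a i"
proof -
  interpret ring R by fact
  have "\<exists>r\<in>carrier R. \<forall>i<m. \<sigma> i r = a i" if "m \<le> n" for m
    using that
  proof (induction m)
    case 0
    show ?case by blast
  next
    case (Suc m)
    then have m: "m < n" by simp
    obtain r where r: "r \<in> carrier R" "\<And>i. i < m \<Longrightarrow> \<sigma> i r = a i" using Suc by auto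
    obtain e where e: "e \<in> carrier R" "\<sigma> m e = \<one>\<^bsub>Q m\<^esub>" "\<forall>i<n. i \<noteq> m \<longrightarrow> \<sigma> i e = \<zero>\<^bsub>Q i\<^esub>"
      using comaximal_kernels_separating_element[where Q = Q and \<sigma> = \<sigma> and I = I, OF R hom ker comax m]
      by auto
    have "a m \<in> \<sigma> m ` carrier R" using a[OF m] surj[OF m] by simp
    then obtain x where x: "x \<in> carrier R" "\<sigma> m x = a m" by (metis imageE)
    \<comment> \<open>correct r in the m-th factor only\<close>
    have "\<sigma> i (r \<oplus> e \<otimes> (x \<ominus> r)) = a i" if i: "i < Suc m" for i
    proof -
      interpret hi: ring_hom_ring R "Q i" "\<sigma> i" using hom i m by simp
      have "\<sigma> i (r \<oplus> e \<otimes> (x \<ominus> r)) = \<sigma> i r \<oplus>\<^bsub>Q i\<^esub> \<sigma> i e \<otimes>\<^bsub>Q i\<^esub> (\<sigma> i x \<ominus>\<^bsub>Q i\<^esub> \<sigma> i r)"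
        using r(1) e(1) x(1) by (simp add: minus_eq hi.S.minus_eq)
      also have "\<dots> = a i"
      proof (cases "i = m")
        case True
        interpret hm: ring_hom_ring R "Q m" "\<sigma> m" using hom[OF m] .
        show ?thesis using True e(2) x r(1) a[OF m] by (simp add: hm.S.minus_eq hm.S.a_lcomm hm.S.r_neg)
      next
        case False
        then have im: "i < m" using i by simp
        then have "\<sigma> i e = \<zero>\<^bsub>Q i\<^esub>" using e(3) False m by simp
        then show ?thesis using r im m x(1) a[of i] by (simp add: hi.S.minus_eq)
      qed
      finally show ?thesis .
    qed
    then show ?case using r(1) e(1) x(1) by blast
  qed
  then show ?thesis by blast
qed

lemma left_localization_quotient_iso:
  fixes R (structure)
  assumes R: "ring R" and loc: "is_left_localization R S Q \<sigma>" and surj: "\<sigma> ` carrier R = carrier Q"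
  shows "ring (R Quot ass R S)" and "R Quot ass R S \<simeq> Q"
proof -
  have "ring_hom_ring R Q \<sigma>"
    using loc ring_hom_ringI2[OF R] unfolding is_left_localization_def by blast
  then interpret h: ring_hom_ring R Q \<sigma> .
  have ker: "a_kernel R Q \<sigma> = ass R S"
    using loc unfolding is_left_localization_def a_kernel_def' by blast
  show "ring (R Quot ass R S)" using ideal.quotient_is_ring[OF h.kernel_is_ideal] unfolding ker .
  show "R Quot ass R S \<simeq> Q" using h.FactRing_iso[OF surj] unfolding ker .
qed

lemma conds_left_den:
  assumes "conds R n S" "i < n"
  shows "left_den R (S i)"
  using assms unfolding conds_def maxDen_l_def Den_l_def by auto

lemma localizations_product_decomposition:
  fixes R :: "('a,'m) ring_scheme" (structure) and n :: nat
  assumes R: "ring R" and C: "conds R n S"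
    and loc: "\<And>i. i < n \<Longrightarrow> is_left_localization R (S i) (Q i) (\<sigma> i)"
  shows "product_decomposition R n Q \<sigma>"
proof -
  interpret ring R by fact
  have Cm: "maxDen_l R = S ` {..<n}" and Crad: "loc_radical R = {\<zero>}"
    and Ccom: "\<And>i j. i < n \<Longrightarrow> j < n \<Longrightarrow> i \<noteq> j \<Longrightarrow> ass R (S i) <+>\<^bsub>R\<^esub> ass R (S j) = carrier R"
    and Cq: "\<And>i. i < n \<Longrightarrow> left_loc_maximal (R Quot ass R (S i))"
    using C unfolding conds_def by auto
  have Q: "ring (Q i)" and hom: "\<sigma> i \<in> ring_hom R (Q i)"
    and ker: "{r \<in> carrier R. \<sigma> i r = \<zero>\<^bsub>Q i\<^esub>} = ass R (S i)" if "i < n" for i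
    using loc[OF that] unfolding is_left_localization_def by auto
  have hom_ring: "ring_hom_ring R (Q i) (\<sigma> i)" if "i < n" for i
    using ring_hom_ringI2[OF R Q[OF that] hom[OF that]] .
  have surj: "\<sigma> i ` carrier R = carrier (Q i)" if "i < n" for i
    using left_localization_image_carrier[OF R conds_left_den[OF C that] Cq[OF that] loc[OF that]] .
  show ?thesis
  proof (intro product_decomposition.intro[OF R] product_decomposition_axioms.intro)
    fix a assume "\<And>i. i < n \<Longrightarrow> a i \<in> carrier (Q i)"
    then show "\<exists>r\<in>carrier R. \<forall>i<n. \<sigma> i r = a i"
      using chinese_remainder[where I = "\<lambda>i. ass R (S i)", OF R hom_ring surj ker Ccom] by blast
  next
    fix r r' assume r: "r \<in> carrier R" and r': "r' \<in> carrier R" and eq: "\<And>i. i < n \<Longrightarrow> \<sigma> i r = \<sigma> i r'"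
    have "r \<ominus> r' \<in> ass R (S i)" if i: "i < n" for i
    proof -
      interpret h: ring_hom_ring R "Q i" "\<sigma> i" using hom_ring[OF i] .
      have "\<sigma> i (r \<ominus> r') = \<zero>\<^bsub>Q i\<^esub>" using eq[OF i] r r' by (simp add: minus_eq h.S.r_neg)
      then show ?thesis using ker[OF i] r r' by blast
    qed
    then have "r \<ominus> r' \<in> loc_radical R" unfolding loc_radical_def Cm using r r' by auto
    then have "r \<ominus> r' = \<zero>" using Crad by blast
    then show "r = r'" using r r' by (metis minus_eq r_right_minus_eq)
  qed (use Q hom in auto)
qed

lemma left_localizations_structure:
  fixes R :: "('a,'m) ring_scheme" (structure) and n :: nat
    and Q :: "nat \<Rightarrow> ('c,'k) ring_scheme" and \<sigma> :: "nat \<Rightarrow> 'a \<Rightarrow> 'c"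
  assumes R: "ring R" and C: "conds R n S"
    and loc: "\<forall>i<n. is_left_localization R (S i) (Q i) (\<sigma> i)"
  shows "(\<forall>i<n. left_loc_maximal (Q i)
                 \<and> \<sigma> i ` carrier R = carrier (Q i)
                 \<and> {r \<in> carrier R. \<sigma> i r = \<zero>\<^bsub>Q i\<^esub>} = ass R (S i)
                 \<and> Q i \<simeq> R Quot ass R (S i))
          \<and> (\<lambda>r. \<lambda>i\<in>{..<n}. \<sigma> i r) \<in> ring_iso R (prod_ring n Q)
          \<and> (\<forall>i<n. (\<lambda>r. \<lambda>j\<in>{..<n}. \<sigma> j r) ` S i
                     = {f \<in> carrier (prod_ring n Q). f i \<in> Units (Q i)}
                 \<and> S i = {r \<in> carrier R. \<sigma> i r \<in> Units (Q i)}
                 \<and> \<sigma> i ` S i = Units (Q i))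
          \<and> (\<forall>i<n. (\<lambda>r. \<lambda>j\<in>{..<n}. \<sigma> j r) ` ass R (S i)
                     = {f \<in> carrier (prod_ring n Q). f i = \<zero>\<^bsub>Q i\<^esub>})"
proof -
  interpret D: product_decomposition R n Q \<sigma>
    by (rule localizations_product_decomposition[OF R C]) (use loc in blast)
  have Cq: "\<And>i. i < n \<Longrightarrow> left_loc_maximal (R Quot ass R (S i))"
    using C unfolding conds_def by blast
  have ker: "{r \<in> carrier R. \<sigma> i r = \<zero>\<^bsub>Q i\<^esub>} = ass R (S i)"
    and units: "\<sigma> i ` S i \<subseteq> Units (Q i)" if "i < n" for i
    using loc that unfolding is_left_localization_def by auto
  have iso: "ring (R Quot ass R (S i))" "R Quot ass R (S i) \<simeq> Q i" if "i < n" for i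
    using left_localization_quotient_iso[OF R _ D.component_image] loc that by auto
  have L: "left_loc_maximal (Q i)" if "i < n" for i
    using left_loc_maximal_iso[OF Cq[OF that] D.component_ring[OF that] iso(2)[OF that]] .
  have S_eq: "S i = D.units_preimage i" if i: "i < n" for i
  proof -
    have "D.units_preimage i \<in> Den_l R"
      using D.left_den_units_preimage[OF i left_loc_maximal_one_neq_zero[OF L[OF i]]]
      unfolding Den_l_def by blast
    moreover have "S i \<subseteq> D.units_preimage i"
      using units[OF i] mult_subsetD(1)[OF left_den_mult_subset[OF conds_left_den[OF C i]]]
      unfolding D.units_preimage_def by blast
    moreover have "S i \<in> maxDen_l R" using C i unfolding conds_def by blast
    ultimately show ?thesis unfolding maxDen_l_def by blast
  qed
  have units_image: "\<sigma> i ` S i = Units (Q i)" if i: "i < n" for i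
  proof
    show "Units (Q i) \<subseteq> \<sigma> i ` S i"
    proof
      fix u assume u: "u \<in> Units (Q i)"
      then have "u \<in> \<sigma> i ` carrier R" using D.component_image[OF i] unfolding Units_def by blast
      then obtain r where "r \<in> carrier R" "u = \<sigma> i r" by (rule imageE)
      then show "u \<in> \<sigma> i ` S i" using u S_eq[OF i] unfolding D.units_preimage_def by blast
    qed
  qed (rule units[OF i])
  show ?thesis
  proof (intro conjI allI impI)
    fix i assume i: "i < n"
    show "left_loc_maximal (Q i)" using L[OF i] .
    show "\<sigma> i ` carrier R = carrier (Q i)" using D.component_image[OF i] .
    show "{r \<in> carrier R. \<sigma> i r = \<zero>\<^bsub>Q i\<^esub>} = ass R (S i)" using ker[OF i] .
    show "Q i \<simeq> R Quot ass R (S i)" using ring_iso_sym[OF iso[OF i]] .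
    show "S i = {r \<in> carrier R. \<sigma> i r \<in> Units (Q i)}" using S_eq[OF i] unfolding D.units_preimage_def .
    then show "(\<lambda>r. \<lambda>j\<in>{..<n}. \<sigma> j r) ` S i = {f \<in> carrier (prod_ring n Q). f i \<in> Units (Q i)}"
      using D.product_map_image_component[OF i] by simp
    show "\<sigma> i ` S i = Units (Q i)" using units_image[OF i] .
    show "(\<lambda>r. \<lambda>j\<in>{..<n}. \<sigma> j r) ` ass R (S i) = {f \<in> carrier (prod_ring n Q). f i = \<zero>\<^bsub>Q i\<^esub>}"
      unfolding ker[OF i, symmetric] by (rule D.product_map_image_component[OF i])
  qed (rule D.product_map_iso)
qed

lemma product_iso_of_conds:
  fixes R :: "('a,'m) ring_scheme" (structure)
  assumes R: "ring R" and C: "conds R n S"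
  shows "\<exists>A :: nat \<Rightarrow> 'a set ring. (\<forall>i<n. left_loc_maximal (A i)) \<and> R \<simeq> prod_ring n A"
proof -
  define Q where "Q i = R Quot ass R (S i)" for i
  have L: "left_loc_maximal (Q i)" if "i < n" for i
    using C that unfolding conds_def Q_def by blast
  have "is_left_localization R (S i) (Q i) ((+>) (ass R (S i)))" if i: "i < n" for i
    using quotient_is_left_localization[OF R conds_left_den[OF C i]] L[OF i] unfolding Q_def by blast
  then interpret product_decomposition R n Q "\<lambda>i. (+>) (ass R (S i))"
    by (rule localizations_product_decomposition[OF R C])
  have "R \<simeq> prod_ring n Q" using product_map_iso unfolding is_ring_iso_def by blast
  then show ?thesis using L by blast
qed

theorem theorem2p11:
  fixes R :: "('a,'m) ring_scheme" and n :: nat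
  assumes "ring R" and "n \<ge> 1"
  shows
    "((\<exists>A :: nat \<Rightarrow> 'b ring. (\<forall>i<n. left_loc_maximal (A i)) \<and> R \<simeq> prod_ring n A)
        \<longrightarrow> (\<exists>S. conds R n S))
     \<and> ((\<exists>S. conds R n S)
        \<longrightarrow> (\<exists>A :: nat \<Rightarrow> 'a set ring. (\<forall>i<n. left_loc_maximal (A i)) \<and> R \<simeq> prod_ring n A))
     \<and> (\<forall>S (Q :: nat \<Rightarrow> ('c,'k) ring_scheme) (\<sigma> :: nat \<Rightarrow> 'a \<Rightarrow> 'c).
          conds R n S \<and> (\<forall>i<n. is_left_localization R (S i) (Q i) (\<sigma> i)) \<longrightarrow>
          (\<forall>i<n. left_loc_maximal (Q i)
                 \<and> \<sigma> i ` carrier R = carrier (Q i)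
                 \<and> {r \<in> carrier R. \<sigma> i r = \<zero>\<^bsub>Q i\<^esub>} = ass R (S i)
                 \<and> Q i \<simeq> R Quot ass R (S i))
          \<and> (\<lambda>r. \<lambda>i\<in>{..<n}. \<sigma> i r) \<in> ring_iso R (prod_ring n Q)
          \<and> (\<forall>i<n. (\<lambda>r. \<lambda>j\<in>{..<n}. \<sigma> j r) ` S i
                     = {f \<in> carrier (prod_ring n Q). f i \<in> Units (Q i)}
                 \<and> S i = {r \<in> carrier R. \<sigma> i r \<in> Units (Q i)}
                 \<and> \<sigma> i ` S i = Units (Q i))
          \<and> (\<forall>i<n. (\<lambda>r. \<lambda>j\<in>{..<n}. \<sigma> j r) ` ass R (S i)
                     = {f \<in> carrier (prod_ring n Q). f i = \<zero>\<^bsub>Q i\<^esub>}))"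
proof (intro conjI impI)
  show "\<exists>S. conds R n S"
    if "\<exists>A :: nat \<Rightarrow> 'b ring. (\<forall>i<n. left_loc_maximal (A i)) \<and> R \<simeq> prod_ring n A"
    using that by (elim exE conjE) (rule conds_of_product_iso[OF assms(1)])
  show "\<exists>A :: nat \<Rightarrow> 'a set ring. (\<forall>i<n. left_loc_maximal (A i)) \<and> R \<simeq> prod_ring n A"
    if "\<exists>S. conds R n S"
    using that by (elim exE) (rule product_iso_of_conds[OF assms(1)])
qed (intro allI impI, elim conjE, rule left_localizations_structure[OF assms(1)])

end
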